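(* Let $\mathsf a$ be a symmetric $L$-density and let $K>0$. Define $$\lfloor\mathsf a\rfloor_{\mathrm{sym}K}=\gamma\big(p\,\Delta_{-K}+(1-p)\,\Delta_{K}\big)+\mathsf a\,\mathbb 1_{\{|x|<K\}},$$ where $p=e^{-K}/(1+e^{-K})$, $\gamma=\mathbb P_{\mathsf a}\{|X|\ge K\}$, and $\mathsf a\,\mathbb 1_{\{|x|<K\}}$ is the restriction of $\mathsf a$ to $(-K,K)$. Then: (i) $\lfloor\mathsf a\rfloor_{\mathrm{sym}K}$ is a symmetric $L$-density; (ii) $\lfloor\mathsf a\rfloor_K\prec\lfloor\mathsf a\rfloor_{\mathrm{sym}K}$.
   Context: - An $L$-density is a probability distribution on $[-\infty,+\infty]$, thought of as the law of a log-likelihood ratio conditioned on transmitted bit $X=+1$. - An $L$-density $\mathsf a$ is symmetric if $\int f(-x)\,\mathsf a(dx)=\int e^{-x}f(x)\,\mathsf a(dx)$ for all bounded measurable $f$ (with $e^{-\infty}=0$). Equivalently, $e^{-x/2}\mathsf a(x)$ is even. - $\Delta_z$ denotes the point mass at $z$. - Saturation: $\lfloor x\rfloor_K=\min(K,|x|)\,\mathrm{sgn}(x)$, and $\lfloor\mathsf a\rfloor_K$ is the law of $\lfloor X\rfloor_K$ for $X\sim\mathsf a$. - Degradation: view an $L$-density $\mathsf a$ as a binary-input channel whose output has law $\mathsf a$ given input $+1$ and the mirror image of $\mathsf a$ given input $-1$. Then $\mathsf a\prec\mathsf b$ ($\mathsf b$ degraded with respect to $\mathsf a$) means there is a Markov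 kernel $W$ on $[-\infty,\infty]$ with $W(-y,-B)=W(y,B)$ for all $y$ and measurable $B$, such that $\mathsf b(B)=\int W(y,B)\,\mathsf a(dy)$. *)

theory Defs
  imports "HOL-Probability.Probability"
begin

definition L_density :: "ereal measure \<Rightarrow> bool" where
  "L_density a \<longleftrightarrow> prob_space a \<and> sets a = sets (borel :: ereal measure)"

fun exp_neg_ereal :: "ereal \<Rightarrow> ennreal" where
  "exp_neg_ereal (ereal r) = ennreal (exp (- r))"
| "exp_neg_ereal PInfty = 0"
| "exp_neg_ereal MInfty = \<infinity>"

text \<open>Symmetry: int f(-x) a(dx) = int e^{-x} f(x) a(dx) for bounded measurable f
  (stated for nonnegative f; the signed case follows by splitting f = f+ - f-).\<close>
definition symmetric_L :: "ereal measure \<Rightarrow> bool" where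
  "symmetric_L a \<longleftrightarrow>
     (\<forall>f :: ereal \<Rightarrow> real. f \<in> borel_measurable borel \<longrightarrow> bounded (range f) \<longrightarrow> (\<forall>x. 0 \<le> f x) \<longrightarrow>
        (\<integral>\<^sup>+ x. ennreal (f (- x)) \<partial>a) = (\<integral>\<^sup>+ x. exp_neg_ereal x * ennreal (f x) \<partial>a))"

definition sat :: "real \<Rightarrow> ereal \<Rightarrow> ereal" where
  "sat K x = min (ereal K) \<bar>x\<bar> * sgn x"

definition sat_density :: "real \<Rightarrow> ereal measure \<Rightarrow> ereal measure" where
  "sat_density K a = distr a borel (sat K)"

definition symsat_density :: "real \<Rightarrow> ereal measure \<Rightarrow> ereal measure" where
  "symsat_density K a =
     (let p = exp (- K) / (1 + exp (- K));
          \<gamma> = measure a {x. ereal K \<le> \<bar>x\<bar>}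
      in measure_of UNIV (sets borel)
           (\<lambda>B. ennreal (\<gamma> * p) * indicator B (- ereal K)
              + ennreal (\<gamma> * (1 - p)) * indicator B (ereal K)
              + emeasure a (B \<inter> {x. \<bar>x\<bar> < ereal K})))"

definition degraded :: "ereal measure \<Rightarrow> ereal measure \<Rightarrow> bool" where
  "degraded a b \<longleftrightarrow>
     (\<exists>W :: ereal \<Rightarrow> ereal measure.
        W \<in> measurable borel (prob_algebra borel) \<and>
        (\<forall>y. \<forall>B \<in> sets borel. emeasure (W (- y)) (uminus ` B) = emeasure (W y) B) \<and>
        (\<forall>B \<in> sets borel. emeasure b B = (\<integral>\<^sup>+ y. emeasure (W y) B \<partial>a)))"

end

theory Submission
  imports Defs
begin

text \<open>The symmetric saturation is a mixture: the tail mass \<open>\<gamma>\<close> times the L-density of a binary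
  symmetric channel with LLR magnitude \<open>K\<close> (masses at \<open>-K\<close> and \<open>K\<close> in the ratio \<open>e\<^sup>-\<^sup>K : 1\<close>),
  plus the restriction of \<open>a\<close> to \<open>(-K, K)\<close>. Both parts are symmetric, the first by direct
  computation and the second because \<open>(-K, K)\<close> is invariant under negation.

  The ordinary saturation puts the masses \<open>\<alpha> = a[K, \<infinity>]\<close> and \<open>\<beta> = a[-\<infinity>, -K]\<close> at \<open>\<plusminus>K\<close>.
  Symmetry of \<open>a\<close> gives \<open>\<beta> \<le> e\<^sup>-\<^sup>K \<alpha>\<close>, so the target split \<open>\<gamma>(1-p) : \<gamma>p\<close> of
  \<open>\<gamma> = \<alpha> + \<beta>\<close> over \<open>K : -K\<close> lies between \<open>\<alpha> : \<beta>\<close> and \<open>\<beta> : \<alpha>\<close>. Hence the symmetric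
  kernel that fixes every point other than \<open>\<plusminus>K\<close> and flips the sign of \<open>\<plusminus>K\<close> with a suitable
  probability \<open>1 - q\<close> degrades the saturated density into the symmetrically saturated one.\<close>

definition add_measure :: "'a measure \<Rightarrow> 'a measure \<Rightarrow> 'a measure" where
  "add_measure M N = measure_of (space M) (sets M) (\<lambda>A. emeasure M A + emeasure N A)"

lemma sets_add_measure [simp, measurable_cong]: "sets (add_measure M N) = sets M"
  and space_add_measure [simp]: "space (add_measure M N) = space M"
  by (simp_all add: add_measure_def)

lemma emeasure_add_measure:
  assumes N: "sets N = sets M" and A: "A \<in> sets M"
  shows "emeasure (add_measure M N) A = emeasure M A + emeasure N A"
  unfolding add_measure_def
proof (rule emeasure_measure_of_sigma[OF sets.sigma_algebra_axioms _ _ A])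
  show "positive (sets M) (\<lambda>A. emeasure M A + emeasure N A)"
    by (simp add: positive_def)
  show "countably_additive (sets M) (\<lambda>A. emeasure M A + emeasure N A)"
  proof (rule countably_additiveI)
    fix F :: "nat \<Rightarrow> 'a set" assume F: "range F \<subseteq> sets M" "disjoint_family F"
    then have "range F \<subseteq> sets N" using N by simp
    then show "(\<Sum>i. emeasure M (F i) + emeasure N (F i)) = emeasure M (\<Union>i. F i) + emeasure N (\<Union>i. F i)"
      using F by (simp add: suminf_add[symmetric] suminf_emeasure summableI)
  qed
qed

lemma nn_integral_add_measure:
  assumes N: "sets N = sets M" and f: "f \<in> borel_measurable M"
  shows "(\<integral>\<^sup>+x. f x \<partial>add_measure M N) = (\<integral>\<^sup>+x. f x \<partial>M) + (\<integral>\<^sup>+x. f x \<partial>N)"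
  using f
proof induction
  case (cong f g)
  have "space N = space M" by (rule sets_eq_imp_space_eq[OF N])
  with cong show ?case by (simp cong: nn_integral_cong_simp)
next
  case (set A)
  then show ?case using N by (simp add: emeasure_add_measure)
next
  case (mult u c)
  then show ?case using N by (simp add: nn_integral_cmult distrib_left measurable_cong_sets[OF N refl])
next
  case (add u v)
  then show ?case using N by (simp add: nn_integral_add measurable_cong_sets[OF N refl] ac_simps)
next
  case (seq U)
  have "incseq (\<lambda>i. \<integral>\<^sup>+x. U i x \<partial>L)" for L
    using \<open>incseq U\<close> by (auto simp: incseq_def le_fun_def intro: nn_integral_mono)
  with seq show ?case using N
    by (simp add: nn_integral_monotone_convergence_SUP measurable_cong_sets[OF N refl] image_comp
        ennreal_SUP_add)
qed

lemma uminus_image_ereal: "uminus ` (B::ereal set) = uminus -` B"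
  by (force simp: image_iff intro: ereal_uminus_uminus[symmetric])

lemma uminus_image_ereal_sets:
  assumes "B \<in> sets borel"
  shows "uminus ` (B::ereal set) \<in> sets borel"
proof -
  have "(\<lambda>x::ereal. - x) \<in> borel_measurable borel" by measurable
  from measurable_sets[OF this assms] show ?thesis
    unfolding uminus_image_ereal by simp
qed

lemma indicator_uminus_image: "indicator (uminus ` (B::ereal set)) (- x) = indicator B x"
  unfolding uminus_image_ereal by (simp add: indicator_def)

definition two_point_measure :: "real \<Rightarrow> 'a::topological_space \<Rightarrow> 'a \<Rightarrow> 'a measure" where
  "two_point_measure q u v =
     add_measure (scale_measure (ennreal q) (return borel u)) (scale_measure (ennreal (1 - q)) (return borel v))"

lemma sets_two_point_measure [simp, measurable_cong]: "sets (two_point_measure q u v) = sets borel"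
  and space_two_point_measure [simp]: "space (two_point_measure q u v) = UNIV"
  by (simp_all add: two_point_measure_def space_scale_measure)

lemma emeasure_two_point_measure:
  "B \<in> sets borel \<Longrightarrow>
     emeasure (two_point_measure q u v) B = ennreal q * indicator B u + ennreal (1 - q) * indicator B v"
  by (simp add: two_point_measure_def emeasure_add_measure)

lemma nn_integral_two_point_measure:
  "g \<in> borel_measurable borel \<Longrightarrow>
     (\<integral>\<^sup>+x. g x \<partial>two_point_measure q u v) = ennreal q * g u + ennreal (1 - q) * g v"
  unfolding two_point_measure_def
  by (subst nn_integral_add_measure) (simp_all add: nn_integral_scale_measure nn_integral_return
      measurable_cong_sets[OF sets_scale_measure refl])

lemma prob_space_two_point_measure:
  assumes "0 \<le> q" "q \<le> 1"
  shows "prob_space (two_point_measure q u v)"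
proof
  show "emeasure (two_point_measure q u v) (space (two_point_measure q u v)) = 1"
    using assms by (simp add: emeasure_two_point_measure ennreal_plus[symmetric])
qed

lemma emeasure_two_point_measure_uminus:
  fixes u v :: ereal
  assumes B: "B \<in> sets borel"
  shows "emeasure (two_point_measure q (- u) (- v)) (uminus ` B) = emeasure (two_point_measure q u v) B"
  using B uminus_image_ereal_sets[OF B] by (simp add: emeasure_two_point_measure indicator_uminus_image)

lemma emeasure_two_point_measure_mixture:
  fixes \<alpha> \<beta> p q :: real
  assumes "0 \<le> \<alpha>" "0 \<le> \<beta>" "0 \<le> q" "q \<le> 1" "0 \<le> p" "p \<le> 1"
    and weights: "\<alpha> * q + \<beta> * (1 - q) = (\<alpha> + \<beta>) * (1 - p)" "\<alpha> * (1 - q) + \<beta> * q = (\<alpha> + \<beta>) * p"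
    and B: "B \<in> sets borel"
  shows "ennreal \<alpha> * emeasure (two_point_measure q u v) B + ennreal \<beta> * emeasure (two_point_measure q v u) B
    = ennreal (\<alpha> + \<beta>) * emeasure (two_point_measure p v u) B"
proof -
  let ?u = "indicator B u :: ennreal" and ?v = "indicator B v :: ennreal"
  have "ennreal (\<alpha> + \<beta>) * emeasure (two_point_measure p v u) B
      = ennreal ((\<alpha> + \<beta>) * p) * ?v + ennreal ((\<alpha> + \<beta>) * (1 - p)) * ?u"
    using assms(1-6) B
    by (simp only: emeasure_two_point_measure ennreal_mult distrib_left mult.assoc add_nonneg_nonneg)
  also have "\<dots> = ennreal (\<alpha> * (1 - q) + \<beta> * q) * ?v + ennreal (\<alpha> * q + \<beta> * (1 - q)) * ?u"
    unfolding weights ..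
  also have "\<dots> = ennreal \<alpha> * emeasure (two_point_measure q u v) B + ennreal \<beta> * emeasure (two_point_measure q v u) B"
    using assms(1-6) B by (simp only: emeasure_two_point_measure ennreal_plus ennreal_mult mult_nonneg_nonneg
        diff_ge_0_iff_ge distrib_left distrib_right ac_simps)
  finally show ?thesis ..
qed

lemma exp_neg_ereal_infinity [simp]: "exp_neg_ereal \<infinity> = 0" "exp_neg_ereal (- \<infinity>) = \<infinity>"
  using exp_neg_ereal.simps(2,3) by simp_all

lemma exp_neg_ereal_measurable [measurable]: "exp_neg_ereal \<in> borel_measurable borel"
proof -
  have eq: "exp_neg_ereal = (\<lambda>x. if x = \<infinity> then 0 else if x = -\<infinity> then \<infinity> else ennreal (exp (- real_of_ereal x)))"
    by (rule ext) (case_tac x; simp)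
  show ?thesis unfolding eq by measurable
qed

lemma symmetric_L_test_measurable:
  assumes "f \<in> borel_measurable (borel :: ereal measure)"
  shows "(\<lambda>x. ennreal (f (- x))) \<in> borel_measurable borel"
    and "(\<lambda>x. exp_neg_ereal x * ennreal (f x)) \<in> borel_measurable borel"
  using assms by measurable

lemma symmetric_L_add_measure:
  assumes M: "sets M = sets borel" and N: "sets N = sets borel"
    and "symmetric_L M" "symmetric_L N"
  shows "symmetric_L (add_measure M N)"
  using assms unfolding symmetric_L_def
  by (simp add: nn_integral_add_measure measurable_cong_sets[OF M refl] symmetric_L_test_measurable)

lemma symmetric_L_scale_measure:
  assumes M: "sets M = sets borel" and "symmetric_L M"
  shows "symmetric_L (scale_measure r M)"
  using assms unfolding symmetric_L_def
  by (simp add: nn_integral_scale_measure measurable_cong_sets[OF M refl] symmetric_L_test_measurable)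

lemma symmetric_L_density_indicator:
  assumes M: "sets M = sets borel" and "symmetric_L M"
    and S: "S \<in> sets borel" and S_sym: "\<And>x. - x \<in> S \<longleftrightarrow> x \<in> S"
  shows "symmetric_L (density M (indicator S))"
  unfolding symmetric_L_def
proof (intro allI impI)
  fix f :: "ereal \<Rightarrow> real"
  assume f: "f \<in> borel_measurable borel" "bounded (range f)" "\<forall>x. 0 \<le> f x"
  define g where "g x = indicator S x * f x" for x
  have "g \<in> borel_measurable borel" using f(1) S unfolding g_def by measurable
  moreover have "bounded (range g)"
  proof -
    obtain B where "\<And>x. \<bar>f x\<bar> \<le> B" using f(2) unfolding bounded_iff by auto
    then have "\<bar>g x\<bar> \<le> B" for x by (auto simp: g_def indicator_def intro: order_trans[OF abs_ge_zero])
    then show ?thesis unfolding bounded_iff by auto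
  qed
  moreover have "\<forall>x. 0 \<le> g x" using f(3) by (simp add: g_def)
  ultimately have g_sym: "(\<integral>\<^sup>+x. ennreal (g (- x)) \<partial>M) = (\<integral>\<^sup>+x. exp_neg_ereal x * ennreal (g x) \<partial>M)"
    using \<open>symmetric_L M\<close> unfolding symmetric_L_def by blast
  have dens: "(\<integral>\<^sup>+x. h x \<partial>density M (indicator S)) = (\<integral>\<^sup>+x. indicator S x * h x \<partial>M)"
    if "h \<in> borel_measurable borel" for h
    using that S by (subst nn_integral_density) (simp_all add: measurable_cong_sets[OF M refl])
  have "(\<integral>\<^sup>+x. indicator S x * ennreal (f (- x)) \<partial>M) = (\<integral>\<^sup>+x. ennreal (g (- x)) \<partial>M)"
    by (rule nn_integral_cong) (simp add: g_def S_sym split: split_indicator)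
  moreover have "(\<integral>\<^sup>+x. indicator S x * (exp_neg_ereal x * ennreal (f x)) \<partial>M)
      = (\<integral>\<^sup>+x. exp_neg_ereal x * ennreal (g x) \<partial>M)"
    by (rule nn_integral_cong) (simp add: g_def split: split_indicator)
  ultimately show "(\<integral>\<^sup>+x. ennreal (f (- x)) \<partial>density M (indicator S)) =
        (\<integral>\<^sup>+x. exp_neg_ereal x * ennreal (f x) \<partial>density M (indicator S))"
    using g_sym unfolding dens[OF symmetric_L_test_measurable(1)[OF f(1)]]
      dens[OF symmetric_L_test_measurable(2)[OF f(1)]] by simp
qed

definition bsc_L_density :: "real \<Rightarrow> ereal measure" where
  "bsc_L_density K = two_point_measure (exp (- K) / (1 + exp (- K))) (- ereal K) (ereal K)"

lemma sets_bsc_L_density [simp, measurable_cong]: "sets (bsc_L_density K) = sets borel"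
  and space_bsc_L_density [simp]: "space (bsc_L_density K) = UNIV"
  by (simp_all add: bsc_L_density_def)

lemma prob_space_bsc_L_density: "prob_space (bsc_L_density K)"
  unfolding bsc_L_density_def
  by (rule prob_space_two_point_measure) (simp_all add: add_pos_pos)

lemma symmetric_L_bsc_L_density: "symmetric_L (bsc_L_density K)"
  unfolding symmetric_L_def
proof (intro allI impI)
  fix f :: "ereal \<Rightarrow> real"
  assume f: "f \<in> borel_measurable borel" "bounded (range f)" "\<forall>x. 0 \<le> f x"
  define p where "p = exp (- K) / (1 + exp (- K))"
  have "0 \<le> p" "p \<le> 1" by (simp_all add: p_def add_pos_pos)
  moreover have p_eq: "(1 - p) * exp (- K) = p"
  proof -
    have "1 + exp (- K) \<noteq> 0" using exp_gt_zero[of "- K"] by linarith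
    then show ?thesis by (simp add: p_def field_simps)
  qed
  moreover have "p * exp K = 1 - p"
    by (subst p_eq[symmetric]) (simp add: exp_minus)
  ultimately have weights: "ennreal (1 - p) * ennreal (exp (- K)) = ennreal p"
    "ennreal p * ennreal (exp K) = ennreal (1 - p)"
    by (simp_all add: ennreal_mult[symmetric])
  show "(\<integral>\<^sup>+x. ennreal (f (- x)) \<partial>bsc_L_density K) =
        (\<integral>\<^sup>+x. exp_neg_ereal x * ennreal (f x) \<partial>bsc_L_density K)"
    using f(1) unfolding bsc_L_density_def p_def[symmetric]
    by (simp add: nn_integral_two_point_measure symmetric_L_test_measurable mult.assoc[symmetric]
        weights add.commute)
qed

lemma symsat_density_eq:
  assumes a: "sets a = sets borel"
  shows "symsat_density K a =
    add_measure (scale_measure (ennreal (measure a {x. ereal K \<le> \<bar>x\<bar>})) (bsc_L_density K))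
      (density a (indicator {x. \<bar>x\<bar> < ereal K}))"
    (is "_ = add_measure (scale_measure (ennreal ?\<gamma>) _) (density a (indicator ?S))")
  unfolding symsat_density_def add_measure_def Let_def space_scale_measure space_bsc_L_density
    sets_scale_measure sets_bsc_L_density
proof (rule measure_of_eq)
  let ?p = "exp (- K) / (1 + exp (- K))"
  fix X assume "X \<in> sigma_sets UNIV (sets (borel :: ereal measure))"
  then have X: "X \<in> sets borel" by (metis sets.sigma_sets_eq space_borel)
  have "?S \<in> sets a" using a by measurable
  then have "emeasure (density a (indicator ?S)) X = emeasure a (X \<inter> ?S)"
    using X a by (simp add: emeasure_restricted Int_commute)
  moreover have "ennreal (?\<gamma> * ?p) = ennreal ?\<gamma> * ennreal ?p"
    and "ennreal (?\<gamma> * (1 - ?p)) = ennreal ?\<gamma> * ennreal (1 - ?p)"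
    by (rule ennreal_mult; simp add: add_pos_pos)+
  ultimately show "ennreal (?\<gamma> * ?p) * indicator X (- ereal K) + ennreal (?\<gamma> * (1 - ?p)) * indicator X (ereal K)
      + emeasure a (X \<inter> ?S)
    = emeasure (scale_measure (ennreal ?\<gamma>) (bsc_L_density K)) X + emeasure (density a (indicator ?S)) X"
    by (simp only: emeasure_scale_measure bsc_L_density_def emeasure_two_point_measure[OF X]
        distrib_left mult.assoc)
qed simp

lemma emeasure_symsat_density:
  assumes a: "sets a = sets borel" and B: "B \<in> sets borel"
  shows "emeasure (symsat_density K a) B =
    ennreal (measure a {x. ereal K \<le> \<bar>x\<bar>}) * emeasure (bsc_L_density K) B + emeasure a ({x. \<bar>x\<bar> < ereal K} \<inter> B)"
proof -
  have "{x::ereal. \<bar>x\<bar> < ereal K} \<in> sets a" using a by measurable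
  then show ?thesis using a B by (simp add: symsat_density_eq emeasure_add_measure emeasure_restricted)
qed

lemma L_density_symsat_density:
  assumes "L_density a"
  shows "L_density (symsat_density K a)"
proof -
  interpret prob_space a using assms by (simp add: L_density_def)
  have a: "sets a = sets borel" using assms by (simp add: L_density_def)
  define G where "G = {x::ereal. ereal K \<le> \<bar>x\<bar>}"
  have G: "G \<in> sets a" using a unfolding G_def by measurable
  have "UNIV - G = {x. \<bar>x\<bar> < ereal K}" by (auto simp: G_def)
  then have "emeasure a {x. \<bar>x\<bar> < ereal K} = ennreal (1 - measure a G)"
    using prob_compl[OF G] sets_eq_imp_space_eq[OF a] by (simp add: emeasure_eq_measure)
  moreover have "emeasure (bsc_L_density K) UNIV = 1"
    using prob_space.emeasure_space_1[OF prob_space_bsc_L_density] by simp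
  ultimately have "emeasure (symsat_density K a) UNIV = ennreal (measure a G) + ennreal (1 - measure a G)"
    using emeasure_symsat_density[OF a, of UNIV K] by (simp add: G_def)
  also have "\<dots> = 1" by (simp add: ennreal_plus[symmetric])
  finally show ?thesis
    using a by (auto simp: L_density_def symsat_density_eq space_scale_measure intro!: prob_spaceI)
qed

lemma symmetric_L_symsat_density:
  assumes "L_density a" "symmetric_L a"
  shows "symmetric_L (symsat_density K a)"
proof -
  have a: "sets a = sets borel" using assms by (simp add: L_density_def)
  have "{x::ereal. \<bar>x\<bar> < ereal K} \<in> sets borel" by measurable
  then show ?thesis
    using a assms(2) unfolding symsat_density_eq[OF a]
    by (intro symmetric_L_add_measure symmetric_L_scale_measure symmetric_L_density_indicator
        symmetric_L_bsc_L_density) (simp_all add: bsc_L_density_def)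
qed

lemma symmetric_L_tail_bound:
  assumes a: "sets a = sets borel" and "symmetric_L a"
  shows "emeasure a {x. x \<le> - ereal K} \<le> ennreal (exp (- K)) * emeasure a {x. ereal K \<le> x}"
proof -
  define P where "P = {x::ereal. ereal K \<le> x}"
  have P: "P \<in> sets a" using a unfolding P_def by measurable
  have "indicator P \<in> borel_measurable (borel :: ereal measure)" using P a by simp
  moreover have "bounded (range (indicator P :: ereal \<Rightarrow> real))"
    by (rule boundedI[of _ 1]) auto
  ultimately have sym: "(\<integral>\<^sup>+x. ennreal (indicator P (- x)) \<partial>a) = (\<integral>\<^sup>+x. exp_neg_ereal x * ennreal (indicator P x) \<partial>a)"
    using \<open>symmetric_L a\<close> indicator_pos_le[of P] unfolding symmetric_L_def by blast
  have "emeasure a {x. x \<le> - ereal K} = (\<integral>\<^sup>+x. ennreal (indicator P (- x)) \<partial>a)"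
  proof -
    have "ereal K \<le> - x \<longleftrightarrow> x \<le> - ereal K" for x by (cases x) auto
    then have "(\<integral>\<^sup>+x. ennreal (indicator P (- x)) \<partial>a) = (\<integral>\<^sup>+x. indicator {x. x \<le> - ereal K} x \<partial>a)"
      by (intro nn_integral_cong) (simp add: P_def indicator_def)
    also have "\<dots> = emeasure a {x. x \<le> - ereal K}"
      unfolding a[symmetric] by (intro nn_integral_indicator) (simp only: a, measurable)
    finally show ?thesis ..
  qed
  also have "\<dots> \<le> (\<integral>\<^sup>+x. ennreal (exp (- K)) * indicator P x \<partial>a)"
    unfolding sym
  proof (rule nn_integral_mono)
    fix x
    have "exp_neg_ereal x \<le> ennreal (exp (- K))" if "x \<in> P"
      using that unfolding P_def by (cases x) auto
    then show "exp_neg_ereal x * ennreal (indicator P x) \<le> ennreal (exp (- K)) * indicator P x"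
      by (simp add: indicator_def)
  qed
  also have "\<dots> = ennreal (exp (- K)) * emeasure a P"
    using P by (rule nn_integral_cmult_indicator)
  finally show ?thesis unfolding P_def .
qed

lemma convex_split_weight:
  fixes \<alpha> \<beta> e :: real
  assumes \<beta>: "0 \<le> \<beta>" "\<beta> \<le> e * \<alpha>" and e: "0 < e" "e \<le> 1"
  defines "p \<equiv> e / (1 + e)"
  shows "\<exists>q. 0 \<le> q \<and> q \<le> 1 \<and> \<alpha> * q + \<beta> * (1 - q) = (\<alpha> + \<beta>) * (1 - p)
    \<and> \<alpha> * (1 - q) + \<beta> * q = (\<alpha> + \<beta>) * p"
proof -
  define t where "t = (\<alpha> + \<beta>) * (1 - p)"
  have t: "t * (1 + e) = \<alpha> + \<beta>"
    using e by (simp add: t_def p_def field_simps)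
  have "0 \<le> e * \<alpha>" using \<beta> by simp
  then have "0 \<le> \<alpha>" using e by (simp add: zero_le_mult_iff)
  have "e * \<alpha> \<le> \<alpha>" "e * \<beta> \<le> \<beta>"
    using e \<beta>(1) \<open>0 \<le> \<alpha>\<close> by (auto intro!: mult_left_le_one_le)
  have "\<exists>q. 0 \<le> q \<and> q \<le> 1 \<and> \<alpha> * q + \<beta> * (1 - q) = t"
  proof (cases "\<alpha> = \<beta>")
    case True
    have "0 \<le> \<alpha> * (1 - e)" using \<open>0 \<le> \<alpha>\<close> e by simp
    moreover have "\<alpha> * (1 - e) \<le> 0" using True \<beta> by (simp add: algebra_simps)
    ultimately have "t * (1 + e) = \<alpha> * (1 + e)" using t True by (simp add: algebra_simps)
    then have "t = \<alpha>" using e by simp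
    with True show ?thesis by (intro exI[of _ 1]) simp
  next
    case False
    then have d: "0 < \<alpha> - \<beta>" using \<beta> \<open>e * \<alpha> \<le> \<alpha>\<close> by simp
    have "\<beta> * (1 + e) \<le> t * (1 + e)" "t * (1 + e) \<le> \<alpha> * (1 + e)"
      using t \<beta> \<open>e * \<alpha> \<le> \<alpha>\<close> \<open>e * \<beta> \<le> \<beta>\<close> by (simp_all add: algebra_simps)
    then have "\<beta> \<le> t" "t \<le> \<alpha>" using e by simp_all
    define q where "q = (t - \<beta>) / (\<alpha> - \<beta>)"
    have "q * (\<alpha> - \<beta>) = t - \<beta>" using d by (simp add: q_def)
    moreover have "0 \<le> q" "q \<le> 1" using d \<open>\<beta> \<le> t\<close> \<open>t \<le> \<alpha>\<close> by (simp_all add: q_def)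
    ultimately show ?thesis by (intro exI[of _ q]) (simp add: algebra_simps)
  qed
  moreover have "(\<alpha> + \<beta>) * p = \<alpha> + \<beta> - t" by (simp add: t_def algebra_simps)
  ultimately show ?thesis unfolding t_def by (auto simp: algebra_simps)
qed

lemma sat_eq:
  "0 < K \<Longrightarrow> sat K x = (if ereal K \<le> x then ereal K else if x \<le> - ereal K then - ereal K else x)"
  by (cases x) (auto simp: sat_def min_def sgn_if)

lemma sat_measurable [measurable]:
  assumes "0 < K"
  shows "sat K \<in> borel_measurable borel"
proof -
  have "sat K = (\<lambda>x. if ereal K \<le> x then ereal K else if x \<le> - ereal K then - ereal K else x)"
    using sat_eq[OF assms] by auto
  then show ?thesis by simp
qed

lemma nn_integral_sat_density:
  assumes a: "sets a = sets borel" and K: "0 < K" and g: "g \<in> borel_measurable borel"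
  shows "(\<integral>\<^sup>+y. g y \<partial>sat_density K a) = g (ereal K) * emeasure a {x. ereal K \<le> x}
    + g (- ereal K) * emeasure a {x. x \<le> - ereal K} + (\<integral>\<^sup>+x. indicator {x. \<bar>x\<bar> < ereal K} x * g x \<partial>a)"
proof -
  define P N S where "P = {x::ereal. ereal K \<le> x}" and "N = {x::ereal. x \<le> - ereal K}"
    and "S = {x::ereal. \<bar>x\<bar> < ereal K}"
  have sets: "P \<in> sets a" "N \<in> sets a" "S \<in> sets a" using a unfolding P_def N_def S_def by measurable
  have "(\<integral>\<^sup>+y. g y \<partial>sat_density K a) = (\<integral>\<^sup>+x. g (sat K x) \<partial>a)"
    unfolding sat_density_def using a K g
    by (intro nn_integral_distr) (simp_all add: measurable_cong_sets[OF a refl])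
  also have "\<dots> = (\<integral>\<^sup>+x. g (ereal K) * indicator P x + g (- ereal K) * indicator N x + indicator S x * g x \<partial>a)"
  proof (rule nn_integral_cong)
    fix x
    have "\<not> (ereal K \<le> x \<and> x \<le> - ereal K)" using K by (cases x) auto
    moreover have "x \<in> S \<longleftrightarrow> \<not> ereal K \<le> x \<and> \<not> x \<le> - ereal K" by (cases x) (auto simp: S_def)
    ultimately show "g (sat K x) = g (ereal K) * indicator P x + g (- ereal K) * indicator N x + indicator S x * g x"
      using K by (auto simp: sat_eq P_def N_def indicator_def)
  qed
  also have "\<dots> = g (ereal K) * emeasure a P + g (- ereal K) * emeasure a N + (\<integral>\<^sup>+x. indicator S x * g x \<partial>a)"
    using sets g a by (simp add: nn_integral_add nn_integral_cmult_indicator measurable_cong_sets[OF a refl])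
  finally show ?thesis unfolding P_def N_def S_def .
qed

definition flip_kernel :: "real \<Rightarrow> real \<Rightarrow> ereal \<Rightarrow> ereal measure" where
  "flip_kernel K q y =
     (if y = ereal K then two_point_measure q (ereal K) (- ereal K)
      else if y = - ereal K then two_point_measure q (- ereal K) (ereal K)
      else return borel y)"

lemma flip_kernel_measurable:
  assumes "0 \<le> q" "q \<le> 1"
  shows "flip_kernel K q \<in> borel \<rightarrow>\<^sub>M prob_algebra borel"
proof -
  have "two_point_measure q u v \<in> space (prob_algebra borel)" for u v :: ereal
    using prob_space_two_point_measure[OF assms] by (simp add: space_prob_algebra)
  then show ?thesis unfolding flip_kernel_def[abs_def]
    by (intro measurable_If measurable_const measurable_return_prob_space) simp_all
qed

lemma emeasure_flip_kernel_uminus: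
  assumes K: "0 < K" and B: "B \<in> sets borel"
  shows "emeasure (flip_kernel K q (- y)) (uminus ` B) = emeasure (flip_kernel K q y) B"
proof -
  have "- ereal K \<noteq> ereal K" using K by simp
  moreover have "emeasure (return borel (- y)) (uminus ` B) = emeasure (return borel y) B"
    using B uminus_image_ereal_sets[OF B] by (simp add: indicator_uminus_image)
  ultimately show ?thesis
    using emeasure_two_point_measure_uminus[OF B, of q "ereal K" "- ereal K"]
      emeasure_two_point_measure_uminus[OF B, of q "- ereal K" "ereal K"]
    by (auto simp: flip_kernel_def ereal_uminus_eq_reorder)
qed

lemma nn_integral_flip_kernel_sat_density:
  assumes a: "sets a = sets borel" and K: "0 < K" and q: "0 \<le> q" "q \<le> 1" and B: "B \<in> sets borel"
  shows "(\<integral>\<^sup>+y. emeasure (flip_kernel K q y) B \<partial>sat_density K a) =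
    emeasure a {x. ereal K \<le> x} * emeasure (two_point_measure q (ereal K) (- ereal K)) B
    + emeasure a {x. x \<le> - ereal K} * emeasure (two_point_measure q (- ereal K) (ereal K)) B
    + emeasure a ({x. \<bar>x\<bar> < ereal K} \<inter> B)"
proof -
  define S where "S = {x::ereal. \<bar>x\<bar> < ereal K}"
  let ?W = "\<lambda>y. emeasure (flip_kernel K q y) B"
  have "?W \<in> borel_measurable borel"
    using measurable_compose[OF measurable_prob_algebraD[OF flip_kernel_measurable[OF q]]
        measurable_emeasure_subprob_algebra[OF B]] .
  then have "(\<integral>\<^sup>+y. ?W y \<partial>sat_density K a) =
      ?W (ereal K) * emeasure a {x. ereal K \<le> x} + ?W (- ereal K) * emeasure a {x. x \<le> - ereal K}
      + (\<integral>\<^sup>+x. indicator S x * ?W x \<partial>a)"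
    unfolding S_def by (rule nn_integral_sat_density[OF a K])
  moreover have "(\<integral>\<^sup>+x. indicator S x * ?W x \<partial>a) = (\<integral>\<^sup>+x. indicator (S \<inter> B) x \<partial>a)"
  proof -
    have "x \<in> S \<Longrightarrow> x \<noteq> ereal K \<and> x \<noteq> - ereal K" for x by (auto simp: S_def)
    then show ?thesis
      using B by (intro nn_integral_cong) (auto simp: flip_kernel_def split: split_indicator)
  qed
  moreover have "S \<inter> B \<in> sets a" using a B unfolding S_def by measurable
  ultimately show ?thesis using K by (simp add: flip_kernel_def mult.commute S_def)
qed

lemma degraded_sat_symsat:
  assumes "L_density a" and "symmetric_L a" and K: "0 < K"
  shows "degraded (sat_density K a) (symsat_density K a)"
proof -
  interpret prob_space a using assms(1) by (simp add: L_density_def)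
  have a: "sets a = sets borel" using assms(1) by (simp add: L_density_def)
  define P N where "P = {x::ereal. ereal K \<le> x}" and "N = {x::ereal. x \<le> - ereal K}"
  have sets: "P \<in> sets a" "N \<in> sets a" using a unfolding P_def N_def by measurable
  define \<alpha> \<beta> p where "\<alpha> = measure a P" and "\<beta> = measure a N" and "p = exp (- K) / (1 + exp (- K))"
  have "ennreal \<beta> \<le> ennreal (exp (- K) * \<alpha>)"
    using symmetric_L_tail_bound[OF a assms(2), of K]
    by (simp add: P_def N_def \<alpha>_def \<beta>_def emeasure_eq_measure ennreal_mult)
  then have "\<beta> \<le> exp (- K) * \<alpha>" by (subst (asm) ennreal_le_iff) (auto simp: \<alpha>_def)
  then obtain q where q: "0 \<le> q" "q \<le> 1"
    and weights: "\<alpha> * q + \<beta> * (1 - q) = (\<alpha> + \<beta>) * (1 - p)" "\<alpha> * (1 - q) + \<beta> * q = (\<alpha> + \<beta>) * p"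
    using convex_split_weight[of \<beta> "exp (- K)" \<alpha>] K by (auto simp: \<beta>_def p_def)
  have "ereal K \<le> \<bar>x\<bar> \<longleftrightarrow> x \<in> P \<union> N" for x by (cases x) (auto simp: P_def N_def)
  then have "{x. ereal K \<le> \<bar>x\<bar>} = P \<union> N" by blast
  moreover have "x \<notin> P \<inter> N" for x using K by (cases x) (auto simp: P_def N_def)
  ultimately have \<gamma>: "measure a {x. ereal K \<le> \<bar>x\<bar>} = \<alpha> + \<beta>"
    using sets by (simp add: finite_measure_Union \<alpha>_def \<beta>_def disjoint_iff)
  show ?thesis
    unfolding degraded_def
  proof (intro exI[of _ "flip_kernel K q"] conjI ballI allI)
    show "flip_kernel K q \<in> borel \<rightarrow>\<^sub>M prob_algebra borel" using q by (rule flip_kernel_measurable)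
    fix y and B :: "ereal set" assume "B \<in> sets borel"
    then show "emeasure (flip_kernel K q (- y)) (uminus ` B) = emeasure (flip_kernel K q y) B"
      by (rule emeasure_flip_kernel_uminus[OF K])
  next
    fix B :: "ereal set" assume B: "B \<in> sets borel"
    have "0 \<le> p" "p \<le> 1" by (simp_all add: p_def add_pos_pos)
    then have "ennreal \<alpha> * emeasure (two_point_measure q (ereal K) (- ereal K)) B
        + ennreal \<beta> * emeasure (two_point_measure q (- ereal K) (ereal K)) B
        = ennreal (\<alpha> + \<beta>) * emeasure (bsc_L_density K) B"
      unfolding bsc_L_density_def p_def[symmetric]
      using q weights B by (intro emeasure_two_point_measure_mixture) (simp_all add: \<alpha>_def \<beta>_def)
    then show "emeasure (symsat_density K a) B = (\<integral>\<^sup>+y. emeasure (flip_kernel K q y) B \<partial>sat_density K a)"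
      using nn_integral_flip_kernel_sat_density[OF a K q B] emeasure_symsat_density[OF a B]
      by (simp add: \<gamma> emeasure_eq_measure P_def N_def \<alpha>_def \<beta>_def mult.commute)
  qed
qed

theorem mainTheorem2:
  fixes a :: "ereal measure" and K :: real
  assumes "L_density a" and "symmetric_L a" and "K > 0"
  shows "L_density (symsat_density K a) \<and> symmetric_L (symsat_density K a)
         \<and> degraded (sat_density K a) (symsat_density K a)"
  using L_density_symsat_density symmetric_L_symsat_density degraded_sat_symsat assms by blast

end
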